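(* Let $k\in\mathbb{N}$ and let $M_\psi$ be a bounded multiplication operator on $\mathcal{L}^{(k)}$ or on $\mathcal{L}^{(k)}_0$. Then (a) $\sigma_p(M_\psi)=\psi(T)$; (b) $\sigma(M_\psi)=\overline{\psi(T)}$; (c) $\sigma_{ap}(M_\psi)=\overline{\psi(T)}$.
   Context: $T$ is a tree (locally finite, connected, simply connected graph, identified with its vertex set) without terminal vertices, rooted at $o$. $|v|$ is the distance (number of edges) from $o$ to $v$; for $v\ne o$, $v^-$ is the parent of $v$ (its neighbor on the path to $o$). $T^*=T\setminus\{o\}$, $Df(v)=|f(v)-f(v^-)|$ for $v\in T^*$. For $x\ge1$: $\ell_0(x)=1$, $\ell_1(x)=1+\ln x$, $\ell_j(x)=1+\ln\ell_{j-1}(x)$ for $j\ge2$. $\mathcal{L}^{(k)}$ is the space of $f:T\to\mathbb{C}$ with $\sup_{v\in T^*}|v|\prod_{j=0}^{k-1}\ell_j(|v|)Df(v)<\infty$, normed by $\|f\|_k=|f(o)|+\sup_{v\in T^*}|v|\prod_{j=0}^{k-1}\ell_j(|v|)Df(v)$; $\mathcal{L}^{(k)}_0$ is its subspace of $f$ with $|v|\prod_{j=0}^{k-1}\ell_j(|v|)Df(v)\to0$ as $|v|\to\infty$. $M_\psi f=\psi f$. $\sigma$, $\sigma_p$, $\sigma_{ap}$ denote the spectrum, point spectrum and approximate point spectrum of the operator on the space where it acts. *)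

theory Defs
  imports "HOL-Analysis.Analysis"
begin

text \<open>A graph is given by an adjacency relation E on the vertex type 'v;
  the tree is identified with its vertex set, i.e. all of UNIV.\<close>

definition walk :: "('v \<Rightarrow> 'v \<Rightarrow> bool) \<Rightarrow> 'v \<Rightarrow> 'v \<Rightarrow> nat \<Rightarrow> bool" where
  "walk E u v n \<longleftrightarrow> (\<exists>p. length p = Suc n \<and> hd p = u \<and> last p = v \<and>
      (\<forall>i<n. E (p ! i) (p ! Suc i)))"

definition is_cycle :: "('v \<Rightarrow> 'v \<Rightarrow> bool) \<Rightarrow> 'v list \<Rightarrow> bool" where
  "is_cycle E p \<longleftrightarrow> length p \<ge> 3 \<and> distinct p \<and>
      (\<forall>i. Suc i < length p \<longrightarrow> E (p ! i) (p ! Suc i)) \<and> E (last p) (hd p)"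

definition rooted_tree_no_terminal :: "('v \<Rightarrow> 'v \<Rightarrow> bool) \<Rightarrow> 'v \<Rightarrow> bool" where
  "rooted_tree_no_terminal E r \<longleftrightarrow>
     (\<forall>u v. E u v \<longrightarrow> E v u) \<and> (\<forall>v. \<not> E v v) \<and>
     (\<forall>v. finite {u. E v u}) \<and>
     (\<forall>u v. \<exists>n. walk E u v n) \<and>
     (\<forall>p. \<not> is_cycle E p) \<and>
     (\<forall>v. card {u. E v u} \<noteq> 1)"

definition tdist :: "('v \<Rightarrow> 'v \<Rightarrow> bool) \<Rightarrow> 'v \<Rightarrow> 'v \<Rightarrow> nat" where
  "tdist E r v = (LEAST n. walk E r v n)"

definition parent :: "('v \<Rightarrow> 'v \<Rightarrow> bool) \<Rightarrow> 'v \<Rightarrow> 'v \<Rightarrow> 'v" where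
  "parent E r v = (THE u. E v u \<and> Suc (tdist E r u) = tdist E r v)"

definition Df :: "('v \<Rightarrow> 'v \<Rightarrow> bool) \<Rightarrow> 'v \<Rightarrow> ('v \<Rightarrow> complex) \<Rightarrow> 'v \<Rightarrow> real" where
  "Df E r f v = cmod (f v - f (parent E r v))"

fun ell :: "nat \<Rightarrow> real \<Rightarrow> real" where
  "ell 0 x = 1"
| "ell (Suc 0) x = 1 + ln x"
| "ell (Suc (Suc j)) x = 1 + ln (ell (Suc j) x)"

definition wt :: "nat \<Rightarrow> nat \<Rightarrow> real" where
  "wt k n = real n * (\<Prod>j<k. ell j (real n))"

definition Lk :: "('v \<Rightarrow> 'v \<Rightarrow> bool) \<Rightarrow> 'v \<Rightarrow> nat \<Rightarrow> ('v \<Rightarrow> complex) set" where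
  "Lk E r k = {f. bdd_above ((\<lambda>v. wt k (tdist E r v) * Df E r f v) ` {v. v \<noteq> r})}"

definition Lk0 :: "('v \<Rightarrow> 'v \<Rightarrow> bool) \<Rightarrow> 'v \<Rightarrow> nat \<Rightarrow> ('v \<Rightarrow> complex) set" where
  "Lk0 E r k = {f \<in> Lk E r k. \<forall>\<epsilon>>0. \<exists>N. \<forall>v. v \<noteq> r \<longrightarrow> tdist E r v \<ge> N \<longrightarrow>
                   wt k (tdist E r v) * Df E r f v < \<epsilon>}"

text \<open>The supremum is taken over the nonnegative quantities together with 0,
  which agrees with the supremum over T* whenever T* is nonempty.\<close>
definition normk :: "('v \<Rightarrow> 'v \<Rightarrow> bool) \<Rightarrow> 'v \<Rightarrow> nat \<Rightarrow> ('v \<Rightarrow> complex) \<Rightarrow> real" where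
  "normk E r k f = cmod (f r) +
     Sup (insert 0 ((\<lambda>v. wt k (tdist E r v) * Df E r f v) ` {v. v \<noteq> r}))"

definition mult_op :: "('v \<Rightarrow> complex) \<Rightarrow> ('v \<Rightarrow> complex) \<Rightarrow> ('v \<Rightarrow> complex)" where
  "mult_op \<psi> f = (\<lambda>v. \<psi> v * f v)"

definition bounded_op :: "('v \<Rightarrow> complex) set \<Rightarrow> (('v \<Rightarrow> complex) \<Rightarrow> real)
     \<Rightarrow> (('v \<Rightarrow> complex) \<Rightarrow> ('v \<Rightarrow> complex)) \<Rightarrow> bool" where
  "bounded_op X N A \<longleftrightarrow> (\<forall>f\<in>X. A f \<in> X) \<and>
     (\<forall>f\<in>X. \<forall>g\<in>X. \<forall>a b. A (\<lambda>v. a * f v + b * g v) = (\<lambda>v. a * A f v + b * A g v)) \<and>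
     (\<exists>C. \<forall>f\<in>X. N (A f) \<le> C * N f)"

definition invertible_op :: "('v \<Rightarrow> complex) set \<Rightarrow> (('v \<Rightarrow> complex) \<Rightarrow> real)
     \<Rightarrow> (('v \<Rightarrow> complex) \<Rightarrow> ('v \<Rightarrow> complex)) \<Rightarrow> bool" where
  "invertible_op X N A \<longleftrightarrow> (\<exists>S. bounded_op X N S \<and> (\<forall>f\<in>X. S (A f) = f \<and> A (S f) = f))"

definition shift_op :: "(('v \<Rightarrow> complex) \<Rightarrow> ('v \<Rightarrow> complex)) \<Rightarrow> complex
     \<Rightarrow> ('v \<Rightarrow> complex) \<Rightarrow> ('v \<Rightarrow> complex)" where
  "shift_op A c f = (\<lambda>v. A f v - c * f v)"

definition op_spectrum where
  "op_spectrum X N A = {c. \<not> invertible_op X N (shift_op A c)}"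

definition point_spectrum where
  "point_spectrum X N A = {c. \<exists>f\<in>X. f \<noteq> (\<lambda>_. 0) \<and> A f = (\<lambda>v. c * f v)}"

definition approx_point_spectrum where
  "approx_point_spectrum X N A = {c. \<exists>fs. (\<forall>n. fs n \<in> X \<and> N (fs n) = 1) \<and>
       (\<lambda>n. N (shift_op A c (fs n))) \<longlonglongrightarrow> 0}"

end

theory Submission
  imports Defs
begin

text \<open>The indicator function of a single vertex w is an eigenvector of M_\<psi> for \<psi>(w); after
  normalisation these indicators are approximate eigenvectors for every point of the closure of
  \<psi>(T). They lie in both spaces because in a tree every vertex other than the root has a unique
  parent, one step closer to the root, so an indicator has only finitely many nonzero differences.
  Testing boundedness of M_\<psi> on them shows that \<psi> is bounded. If c has distance \<delta> > 0 from
  \<psi>(T), the differences of f / (\<psi> - c) are dominated by those of f and \<psi> f, and both spaces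
  are closed under such domination, so multiplication by 1 / (\<psi> - c) is a bounded inverse of
  M_\<psi> - c. With the general inclusion of the approximate point spectrum in the spectrum this
  closes the chain of inclusions between the three sets.\<close>

lemma walk_iff_fun:
  "walk E u v n \<longleftrightarrow> (\<exists>q. q 0 = u \<and> q n = v \<and> (\<forall>i<n. E (q i) (q (Suc i))))"
proof
  assume "walk E u v n"
  then obtain p where p: "length p = Suc n" "hd p = u" "last p = v" "\<forall>i<n. E (p ! i) (p ! Suc i)"
    unfolding walk_def by blast
  then have "p ! 0 = u" "p ! n = v"
    by (auto simp: hd_conv_nth last_conv_nth simp flip: length_greater_0_conv)
  with p(4) show "\<exists>q. q 0 = u \<and> q n = v \<and> (\<forall>i<n. E (q i) (q (Suc i)))"
    by (intro exI[of _ "nth p"]) auto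
next
  assume "\<exists>q. q 0 = u \<and> q n = v \<and> (\<forall>i<n. E (q i) (q (Suc i)))"
  then obtain q where "q 0 = u" "q n = v" "\<forall>i<n. E (q i) (q (Suc i))" by blast
  then show "walk E u v n"
    unfolding walk_def
    by (intro exI[of _ "map q [0..<Suc n]"]) (simp del: upt_Suc add: hd_map last_map nth_map_upt)
qed

lemma walk_trans:
  assumes "walk E u v m" "walk E v w n"
  shows "walk E u w (m + n)"
proof -
  obtain p where p: "p 0 = u" "p m = v" "\<forall>i<m. E (p i) (p (Suc i))"
    using assms(1) unfolding walk_iff_fun by blast
  obtain q where q: "q 0 = v" "q n = w" "\<forall>i<n. E (q i) (q (Suc i))"
    using assms(2) unfolding walk_iff_fun by blast
  let ?pq = "\<lambda>i. if i \<le> m then p i else q (i - m)"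
  have "E (?pq i) (?pq (Suc i))" if "i < m + n" for i
    using that p q by (cases "i < m") (auto simp: Suc_diff_le)
  moreover have "?pq 0 = u" "?pq (m + n) = w"
    using p q by auto
  ultimately show ?thesis
    unfolding walk_iff_fun by (intro exI[of _ ?pq]) blast
qed

lemma walk_refl: "walk E u u 0"
  unfolding walk_iff_fun by auto

lemma tdist_root: "tdist E r r = 0"
  unfolding tdist_def using walk_refl by (metis Least_eq_0)

lemma is_cycle_map_upt:
  assumes "3 \<le> L" "inj_on g {..<L}"
    and "\<And>i. Suc i < L \<Longrightarrow> E (g i) (g (Suc i))" "E (g (L - 1)) (g 0)"
  shows "is_cycle E (map g [0..<L])"
  using assms unfolding is_cycle_def
  by (simp del: upt_Suc add: distinct_map atLeast0LessThan hd_map last_map)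

definition geodesic_loop :: "(nat \<Rightarrow> 'v) \<Rightarrow> (nat \<Rightarrow> 'v) \<Rightarrow> nat \<Rightarrow> nat \<Rightarrow> nat \<Rightarrow> 'v" where
  "geodesic_loop p q m K i = (if i < K then p (m + i) else q (m + 2 * K - i))"

locale rooted_tree =
  fixes E :: "'v \<Rightarrow> 'v \<Rightarrow> bool" and r :: 'v
  assumes tree: "rooted_tree_no_terminal E r"
begin

abbreviation d :: "'v \<Rightarrow> nat" where "d \<equiv> tdist E r"

lemma edge_sym: "E u v \<Longrightarrow> E v u"
  using tree unfolding rooted_tree_no_terminal_def by blast

lemma walk_tdist: "walk E r v (d v)"
  using tree unfolding rooted_tree_no_terminal_def tdist_def by (metis LeastI_ex)

lemma tdist_le: "walk E r v n \<Longrightarrow> d v \<le> n"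
  unfolding tdist_def by (rule Least_le)

lemma tdist_eq_0_iff: "d v = 0 \<longleftrightarrow> v = r"
  using walk_tdist[of v] tdist_root[of E r] unfolding walk_iff_fun by auto

lemma tdist_geodesic:
  assumes "p 0 = r" "p (d v) = v" "\<forall>i<d v. E (p i) (p (Suc i))" "j \<le> d v"
  shows "d (p j) = j"
proof -
  have "walk E r (p j) j"
    unfolding walk_iff_fun using assms by (intro exI[of _ p]) auto
  then have "d (p j) \<le> j"
    by (rule tdist_le)
  moreover have "walk E (p j) v (d v - j)"
    unfolding walk_iff_fun using assms by (intro exI[of _ "\<lambda>i. p (j + i)"]) auto
  then have "d v \<le> d (p j) + (d v - j)"
    by (intro tdist_le walk_trans[OF walk_tdist])
  ultimately show ?thesis
    using assms(4) by linarith
qed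

text \<open>Two geodesics from the root that meet at indices m and m + K but differ strictly in between
  close up into a cycle; distances from the root keep its vertices apart.\<close>

context
  fixes p q :: "nat \<Rightarrow> 'v" and v :: 'v and m K :: nat
  assumes p: "p 0 = r" "p (d v) = v" "\<forall>i<d v. E (p i) (p (Suc i))"
    and q: "q 0 = r" "q (d v) = v" "\<forall>i<d v. E (q i) (q (Suc i))"
    and bounds: "2 \<le> K" "m + K \<le> d v"
    and meet: "p m = q m" "p (m + K) = q (m + K)"
    and diverge: "\<And>i. m < i \<Longrightarrow> i < m + K \<Longrightarrow> p i \<noteq> q i"
begin

lemma tdist_geodesic_loop:
  assumes "i < 2 * K"
  shows "d (geodesic_loop p q m K i) = (if i < K then m + i else m + 2 * K - i)"
  using assms bounds tdist_geodesic[OF p] tdist_geodesic[OF q] by (auto simp: geodesic_loop_def)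

lemma inj_on_geodesic_loop: "inj_on (geodesic_loop p q m K) {..<2 * K}"
proof (rule inj_onI)
  let ?g = "geodesic_loop p q m K"
  have opposite_sides: False if "i < K" "K \<le> j" "j < 2 * K" "?g i = ?g j" for i j
  proof -
    have "m + i = m + 2 * K - j"
      using tdist_geodesic_loop[of i] tdist_geodesic_loop[of j] that by simp
    then have "p (m + i) = q (m + i)" "m < m + i" "m + i < m + K"
      using that by (auto simp: geodesic_loop_def)
    then show False
      using diverge by blast
  qed
  fix i j assume "i \<in> {..<2 * K}" "j \<in> {..<2 * K}" "?g i = ?g j"
  then have "i < 2 * K" "j < 2 * K" "d (?g i) = d (?g j)"
    by auto
  moreover have "\<not> (i < K \<and> K \<le> j)" "\<not> (j < K \<and> K \<le> i)"
    using opposite_sides[of i j] opposite_sides[of j i] \<open>i < 2 * K\<close> \<open>j < 2 * K\<close> \<open>?g i = ?g j\<close>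
    by auto
  ultimately show "i = j"
    using tdist_geodesic_loop[of i] tdist_geodesic_loop[of j] by (cases "i < K") (simp_all split: if_splits)
qed

lemma geodesic_loop_edge:
  assumes "Suc i < 2 * K"
  shows "E (geodesic_loop p q m K i) (geodesic_loop p q m K (Suc i))"
proof -
  have p_edge: "E (p j) (p (Suc j))" and q_edge: "E (q (Suc j)) (q j)" if "j < m + K" for j
    using that p(3) q(3) bounds edge_sym by auto
  show ?thesis
  proof (rule linorder_cases[of "Suc i" K])
    assume "Suc i < K"
    then show ?thesis
      using p_edge[of "m + i"] by (simp add: geodesic_loop_def)
  next
    assume "Suc i = K"
    then have i: "i < K" "\<not> Suc i < K" and idx: "m + 2 * K - Suc i = Suc (m + i)" "Suc (m + i) = m + K"
      by linarith+
    have "geodesic_loop p q m K i = p (m + i)"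
      using i(1) by (simp add: geodesic_loop_def)
    moreover have "geodesic_loop p q m K (Suc i) = p (Suc (m + i))"
      unfolding geodesic_loop_def using i(2) by (simp only: if_False idx meet(2)[symmetric])
    ultimately show ?thesis
      using p_edge[of "m + i"] i(1) by simp
  next
    assume "K < Suc i"
    then have "geodesic_loop p q m K i = q (Suc (m + 2 * K - Suc i))"
      "geodesic_loop p q m K (Suc i) = q (m + 2 * K - Suc i)"
      using assms by (auto simp: geodesic_loop_def Suc_diff_Suc)
    then show ?thesis
      using q_edge[of "m + 2 * K - Suc i"] \<open>K < Suc i\<close> bounds by simp
  qed
qed

lemma geodesic_loop_closing_edge: "E (geodesic_loop p q m K (2 * K - 1)) (geodesic_loop p q m K 0)"
proof -
  have "geodesic_loop p q m K (2 * K - 1) = q (Suc m)" "geodesic_loop p q m K 0 = q m"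
    using bounds meet(1) by (auto simp: geodesic_loop_def)
  then show ?thesis
    using q(3) bounds edge_sym by simp
qed

lemma is_cycle_geodesic_loop: "is_cycle E (map (geodesic_loop p q m K) [0..<2 * K])"
  using bounds inj_on_geodesic_loop geodesic_loop_edge geodesic_loop_closing_edge
  by (intro is_cycle_map_upt) auto

end

lemma geodesic_unique:
  assumes p: "p 0 = r" "p (d v) = v" "\<forall>i<d v. E (p i) (p (Suc i))"
    and q: "q 0 = r" "q (d v) = v" "\<forall>i<d v. E (q i) (q (Suc i))"
    and "j \<le> d v"
  shows "p j = q j"
proof (rule ccontr)
  assume "p j \<noteq> q j"
  define a where "a = (LEAST i. p i \<noteq> q i)"
  define b where "b = (LEAST i. a < i \<and> p i = q i)"
  have "p a \<noteq> q a"
    unfolding a_def by (rule LeastI) fact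
  have "a \<le> j"
    unfolding a_def by (rule Least_le) fact
  have "0 < a" "a < d v"
    using \<open>p a \<noteq> q a\<close> \<open>a \<le> j\<close> \<open>j \<le> d v\<close> p(1,2) q(1,2) by (auto intro!: gr0I le_neq_implies_less)
  have "a < b \<and> p b = q b"
    unfolding b_def by (rule LeastI[of _ "d v"]) (use \<open>a < d v\<close> p(2) q(2) in simp)
  have "b \<le> d v"
    unfolding b_def by (rule Least_le) (use \<open>a < d v\<close> p(2) q(2) in simp)
  have "p i \<noteq> q i" if "a \<le> i" "i < b" for i
  proof (cases "i = a")
    case False
    then show ?thesis
      using not_less_Least[of i "\<lambda>i. a < i \<and> p i = q i"] that unfolding b_def[symmetric] by auto
  qed (use \<open>p a \<noteq> q a\<close> in simp)
  moreover have "p (a - 1) = q (a - 1)"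
    using not_less_Least[of "a - 1" "\<lambda>i. p i \<noteq> q i"] \<open>0 < a\<close> unfolding a_def[symmetric] by auto
  ultimately have "is_cycle E (map (geodesic_loop p q (a - 1) (b - (a - 1))) [0..<2 * (b - (a - 1))])"
    using \<open>0 < a\<close> \<open>a < b \<and> p b = q b\<close> \<open>b \<le> d v\<close>
    by (intro is_cycle_geodesic_loop[OF p q]) auto
  then show False
    using tree unfolding rooted_tree_no_terminal_def by blast
qed

lemma parent_unique:
  assumes "E v u" "Suc (d u) = d v" "E v u'" "Suc (d u') = d v"
  shows "u = u'"
proof -
  have extend: "\<exists>p. p 0 = r \<and> p (d v) = v \<and> (\<forall>i<d v. E (p i) (p (Suc i))) \<and> p (d v - 1) = w"
    if "E v w" "Suc (d w) = d v" for w
  proof -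
    obtain p where p: "p 0 = r" "p (d w) = w" "\<forall>i<d w. E (p i) (p (Suc i))"
      using walk_tdist[of w] unfolding walk_iff_fun by blast
    have "E ((p(d v := v)) i) ((p(d v := v)) (Suc i))" if "i < d v" for i
      using that p(2,3) edge_sym[OF \<open>E v w\<close>] by (auto simp: less_Suc_eq simp flip: \<open>Suc (d w) = d v\<close>)
    then show ?thesis
      using p(1,2) by (intro exI[of _ "p(d v := v)"]) (auto simp flip: \<open>Suc (d w) = d v\<close>)
  qed
  obtain p where "p 0 = r" "p (d v) = v" "\<forall>i<d v. E (p i) (p (Suc i))" "p (d v - 1) = u"
    using extend[OF assms(1,2)] by blast
  moreover obtain p' where "p' 0 = r" "p' (d v) = v" "\<forall>i<d v. E (p' i) (p' (Suc i))" "p' (d v - 1) = u'"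
    using extend[OF assms(3,4)] by blast
  ultimately show ?thesis
    using geodesic_unique[of p v p' "d v - 1"] by simp
qed

lemma parent_edge_tdist:
  assumes "v \<noteq> r"
  shows "E v (parent E r v)" "Suc (d (parent E r v)) = d v"
proof -
  obtain p where p: "p 0 = r" "p (d v) = v" "\<forall>i<d v. E (p i) (p (Suc i))"
    using walk_tdist[of v] unfolding walk_iff_fun by blast
  have "0 < d v"
    using assms tdist_eq_0_iff by blast
  then have "E v (p (d v - 1)) \<and> Suc (d (p (d v - 1))) = d v"
    using p tdist_geodesic[OF p, of "d v - 1"] edge_sym[of "p (d v - 1)" v] by (auto elim!: allE[of _ "d v - 1"])
  then have "\<exists>!u. E v u \<and> Suc (d u) = d v"
    using parent_unique by blast
  then have "E v (parent E r v) \<and> Suc (d (parent E r v)) = d v"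
    unfolding parent_def by (rule theI')
  then show "E v (parent E r v)" "Suc (d (parent E r v)) = d v"
    by auto
qed

end

abbreviation weighted_Df :: "('v \<Rightarrow> 'v \<Rightarrow> bool) \<Rightarrow> 'v \<Rightarrow> nat \<Rightarrow> ('v \<Rightarrow> complex) \<Rightarrow> 'v \<Rightarrow> real" where
  "weighted_Df E r k f v \<equiv> wt k (tdist E r v) * Df E r f v"

lemma ell_ge_1: "1 \<le> x \<Longrightarrow> 1 \<le> ell j x"
  by (induction j x rule: ell.induct) auto

lemma wt_pos: "0 < n \<Longrightarrow> 0 < wt k n"
  unfolding wt_def using ell_ge_1 by (intro mult_pos_pos prod_pos) (auto intro: less_le_trans[OF zero_less_one])

lemma wt_nonneg: "0 \<le> wt k n"
  using wt_pos[of n k] by (cases "n = 0") (auto simp: wt_def)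

lemma weighted_Df_nonneg: "0 \<le> weighted_Df E r k f v"
  by (simp add: Df_def wt_nonneg)

lemma LkI:
  assumes "\<And>v. v \<noteq> r \<Longrightarrow> weighted_Df E r k f v \<le> B"
  shows "f \<in> Lk E r k"
  unfolding Lk_def using assms by (intro CollectI bdd_aboveI[of _ B]) auto

lemma weighted_Df_le_normk:
  assumes "f \<in> Lk E r k" "v \<noteq> r"
  shows "weighted_Df E r k f v \<le> normk E r k f - cmod (f r)"
  using assms unfolding normk_def Lk_def by (auto intro: cSup_upper)

lemma norm_root_le_normk:
  assumes "f \<in> Lk E r k"
  shows "cmod (f r) \<le> normk E r k f"
  using assms unfolding normk_def Lk_def by (auto intro: cSup_upper)

lemma normk_nonneg:
  assumes "f \<in> Lk E r k"
  shows "0 \<le> normk E r k f"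
  using norm_root_le_normk[OF assms] norm_ge_zero[of "f r"] by linarith

lemma normk_le:
  assumes "\<And>v. v \<noteq> r \<Longrightarrow> weighted_Df E r k f v \<le> B" "0 \<le> B"
  shows "normk E r k f \<le> cmod (f r) + B"
proof -
  have "Sup (insert 0 ((\<lambda>v. weighted_Df E r k f v) ` {v. v \<noteq> r})) \<le> B"
    by (rule cSup_least) (use assms in auto)
  then show ?thesis
    unfolding normk_def by simp
qed

lemma weighted_Df_scale: "weighted_Df E r k (\<lambda>v. a * f v) v = cmod a * weighted_Df E r k f v"
  unfolding Df_def by (simp flip: right_diff_distrib add: norm_mult)

lemma weighted_Df_scale_le_normk:
  assumes "f \<in> Lk E r k" "v \<noteq> r"
  shows "weighted_Df E r k (\<lambda>v. a * f v) v \<le> cmod a * (normk E r k f - cmod (f r))"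
  unfolding weighted_Df_scale using weighted_Df_le_normk[OF assms] by (rule mult_left_mono) simp

lemma Lk_scale:
  assumes "f \<in> Lk E r k"
  shows "(\<lambda>v. a * f v) \<in> Lk E r k"
  using weighted_Df_scale_le_normk[OF assms] by (rule LkI)

lemma normk_scale_le:
  assumes "f \<in> Lk E r k"
  shows "normk E r k (\<lambda>v. a * f v) \<le> cmod a * normk E r k f"
proof -
  have "normk E r k (\<lambda>v. a * f v) \<le> cmod (a * f r) + cmod a * (normk E r k f - cmod (f r))"
    using weighted_Df_scale_le_normk[OF assms] norm_root_le_normk[OF assms] by (intro normk_le) auto
  then show ?thesis
    by (simp add: norm_mult right_diff_distrib)
qed

lemma normk_scale:
  assumes "f \<in> Lk E r k"
  shows "normk E r k (\<lambda>v. a * f v) = cmod a * normk E r k f"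
proof (cases "a = 0")
  case True
  then show ?thesis
    using normk_scale_le[OF assms, of a] normk_nonneg[OF Lk_scale[OF assms, of a]] by simp
next
  case False
  have "normk E r k f = normk E r k (\<lambda>v. inverse a * (a * f v))"
    using False by (simp flip: mult.assoc)
  also have "\<dots> \<le> cmod (inverse a) * normk E r k (\<lambda>v. a * f v)"
    by (rule normk_scale_le[OF Lk_scale[OF assms]])
  finally have "cmod a * normk E r k f \<le> cmod a * (cmod (inverse a) * normk E r k (\<lambda>v. a * f v))"
    by (rule mult_left_mono) simp
  also have "\<dots> = normk E r k (\<lambda>v. a * f v)"
    using False by (simp add: norm_inverse)
  finally show ?thesis
    using normk_scale_le[OF assms, of a] by linarith
qed

lemma eventually_ne_root: "eventually (\<lambda>v. v \<noteq> r) (filtercomap (tdist E r) at_top)"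
  unfolding eventually_filtercomap_at_top_linorder
  by (intro exI[of _ 1]) (auto simp: tdist_root)

lemma Lk0_iff_tendsto:
  "f \<in> Lk0 E r k \<longleftrightarrow>
     f \<in> Lk E r k \<and> ((\<lambda>v. weighted_Df E r k f v) \<longlongrightarrow> 0) (filtercomap (tdist E r) at_top)"
proof -
  have "(\<exists>N. \<forall>v. v \<noteq> r \<longrightarrow> N \<le> tdist E r v \<longrightarrow> weighted_Df E r k f v < \<epsilon>) \<longleftrightarrow>
        eventually (\<lambda>v. dist (weighted_Df E r k f v) 0 < \<epsilon>) (filtercomap (tdist E r) at_top)" for \<epsilon>
  proof -
    have "(\<exists>N. \<forall>v. v \<noteq> r \<longrightarrow> N \<le> tdist E r v \<longrightarrow> weighted_Df E r k f v < \<epsilon>) \<longleftrightarrow>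
          eventually (\<lambda>v. v \<noteq> r \<longrightarrow> weighted_Df E r k f v < \<epsilon>) (filtercomap (tdist E r) at_top)"
      unfolding eventually_filtercomap_at_top_linorder by blast
    also have "\<dots> \<longleftrightarrow> eventually (\<lambda>v. weighted_Df E r k f v < \<epsilon>) (filtercomap (tdist E r) at_top)"
    proof
      assume "eventually (\<lambda>v. v \<noteq> r \<longrightarrow> weighted_Df E r k f v < \<epsilon>) (filtercomap (tdist E r) at_top)"
      with eventually_ne_root show "eventually (\<lambda>v. weighted_Df E r k f v < \<epsilon>) (filtercomap (tdist E r) at_top)"
        by eventually_elim simp
    qed (auto elim: eventually_mono)
    finally show ?thesis
      by (simp add: dist_real_def abs_of_nonneg weighted_Df_nonneg)
  qed
  then show ?thesis
    unfolding Lk0_def tendsto_iff by auto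
qed

lemma Lk0_subset_Lk: "Lk0 E r k \<subseteq> Lk E r k"
  unfolding Lk0_def by blast

lemma weighted_Df_dominated_le:
  assumes "f \<in> Lk E r k" "g \<in> Lk E r k" "0 \<le> \<alpha>" "0 \<le> \<beta>" "v \<noteq> r"
    and "weighted_Df E r k h v \<le> \<alpha> * weighted_Df E r k f v + \<beta> * weighted_Df E r k g v"
  shows "weighted_Df E r k h v \<le> \<alpha> * normk E r k f + \<beta> * normk E r k g"
proof -
  have "weighted_Df E r k f v \<le> normk E r k f" "weighted_Df E r k g v \<le> normk E r k g"
    using weighted_Df_le_normk[OF assms(1,5)] weighted_Df_le_normk[OF assms(2,5)]
      norm_ge_zero[of "f r"] norm_ge_zero[of "g r"] by linarith+
  then have "\<alpha> * weighted_Df E r k f v + \<beta> * weighted_Df E r k g v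
      \<le> \<alpha> * normk E r k f + \<beta> * normk E r k g"
    using assms(3,4) by (intro add_mono mult_left_mono)
  then show ?thesis
    using assms(6) by linarith
qed

lemma Lk_dominated:
  assumes "f \<in> Lk E r k" "g \<in> Lk E r k" "0 \<le> \<alpha>" "0 \<le> \<beta>"
    and "\<And>v. v \<noteq> r \<Longrightarrow> weighted_Df E r k h v \<le> \<alpha> * weighted_Df E r k f v + \<beta> * weighted_Df E r k g v"
  shows "h \<in> Lk E r k"
proof (rule LkI)
  show "weighted_Df E r k h v \<le> \<alpha> * normk E r k f + \<beta> * normk E r k g" if "v \<noteq> r" for v
    by (rule weighted_Df_dominated_le[OF assms(1-4) that assms(5)[OF that]])
qed

lemma normk_dominated_le:
  assumes "f \<in> Lk E r k" "g \<in> Lk E r k" "0 \<le> \<alpha>" "0 \<le> \<beta>"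
    and "\<And>v. v \<noteq> r \<Longrightarrow> weighted_Df E r k h v \<le> \<alpha> * weighted_Df E r k f v + \<beta> * weighted_Df E r k g v"
  shows "normk E r k h \<le> cmod (h r) + (\<alpha> * normk E r k f + \<beta> * normk E r k g)"
proof (rule normk_le)
  show "weighted_Df E r k h v \<le> \<alpha> * normk E r k f + \<beta> * normk E r k g" if "v \<noteq> r" for v
    by (rule weighted_Df_dominated_le[OF assms(1-4) that assms(5)[OF that]])
  show "0 \<le> \<alpha> * normk E r k f + \<beta> * normk E r k g"
    using normk_nonneg[OF assms(1)] normk_nonneg[OF assms(2)] assms(3,4) by simp
qed

lemma Lk0_dominated:
  assumes "f \<in> Lk0 E r k" "g \<in> Lk0 E r k" "0 \<le> \<alpha>" "0 \<le> \<beta>"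
    and "\<And>v. v \<noteq> r \<Longrightarrow> weighted_Df E r k h v \<le> \<alpha> * weighted_Df E r k f v + \<beta> * weighted_Df E r k g v"
  shows "h \<in> Lk0 E r k"
proof -
  have "h \<in> Lk E r k"
    using assms(1,2) Lk0_subset_Lk[of E r k] by (intro Lk_dominated[OF _ _ assms(3-5)]) auto
  moreover have "((\<lambda>v. weighted_Df E r k h v) \<longlongrightarrow> 0) (filtercomap (tdist E r) at_top)"
  proof (rule real_tendsto_sandwich)
    show "eventually (\<lambda>v. 0 \<le> weighted_Df E r k h v) (filtercomap (tdist E r) at_top)"
      by (simp add: weighted_Df_nonneg)
    show "eventually (\<lambda>v. weighted_Df E r k h v \<le> \<alpha> * weighted_Df E r k f v + \<beta> * weighted_Df E r k g v)
            (filtercomap (tdist E r) at_top)"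
      using eventually_ne_root by (rule eventually_mono) (rule assms(5))
    show "((\<lambda>v. \<alpha> * weighted_Df E r k f v + \<beta> * weighted_Df E r k g v) \<longlongrightarrow> 0)
            (filtercomap (tdist E r) at_top)"
      using assms(1,2) unfolding Lk0_iff_tendsto by (intro tendsto_add_zero tendsto_mult_right_zero) auto
  qed simp
  ultimately show ?thesis
    unfolding Lk0_iff_tendsto by simp
qed

lemma dominated_mem:
  assumes "X = Lk E r k \<or> X = Lk0 E r k" "f \<in> X" "g \<in> X" "0 \<le> \<alpha>" "0 \<le> \<beta>"
    and "\<And>v. v \<noteq> r \<Longrightarrow> weighted_Df E r k h v \<le> \<alpha> * weighted_Df E r k f v + \<beta> * weighted_Df E r k g v"
  shows "h \<in> X"
  using assms(1)
proof
  assume "X = Lk E r k"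
  then show ?thesis
    using Lk_dominated[OF _ _ assms(4-6)] assms(2,3) by simp
next
  assume "X = Lk0 E r k"
  then show ?thesis
    using Lk0_dominated[OF _ _ assms(4-6)] assms(2,3) by simp
qed

lemma Df_diff_le: "Df E r (\<lambda>v. f v - c * g v) v \<le> Df E r f v + cmod c * Df E r g v"
proof -
  have "(f v - c * g v) - (f (parent E r v) - c * g (parent E r v)) =
        (f v - f (parent E r v)) - c * (g v - g (parent E r v))"
    by (simp add: algebra_simps)
  then show ?thesis
    unfolding Df_def by (metis norm_mult norm_triangle_ineq4)
qed

lemma diff_scaled_mem:
  assumes "X = Lk E r k \<or> X = Lk0 E r k" "f \<in> X" "g \<in> X"
  shows "(\<lambda>v. f v - c * g v) \<in> X"
  using assms
proof (rule dominated_mem[where \<alpha> = 1 and \<beta> = "cmod c"])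
  fix v
  show "weighted_Df E r k (\<lambda>v. f v - c * g v) v \<le> 1 * weighted_Df E r k f v + cmod c * weighted_Df E r k g v"
    using mult_left_mono[OF Df_diff_le[of E r f c g v] wt_nonneg[of k "tdist E r v"]]
    by (simp add: algebra_simps)
qed auto

lemma scaled_mem:
  assumes "X = Lk E r k \<or> X = Lk0 E r k" "f \<in> X"
  shows "(\<lambda>v. a * f v) \<in> X"
  using assms(1,2,2)
  by (rule dominated_mem[where \<alpha> = "cmod a" and \<beta> = 0]) (auto simp: weighted_Df_scale)

definition delta :: "'v \<Rightarrow> 'v \<Rightarrow> complex" where
  "delta w v = (if v = w then 1 else 0)"

context rooted_tree
begin

lemma Df_delta_le_1: "Df E r (delta w) v \<le> 1"
  unfolding Df_def delta_def by simp

lemma Df_delta_eq_0: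
  assumes "v \<noteq> r" "Suc (d w) < d v"
  shows "Df E r (delta w) v = 0"
  using assms parent_edge_tdist(2)[OF assms(1)] unfolding Df_def delta_def by auto

lemma delta_Lk: "delta w \<in> Lk E r k"
proof (rule LkI)
  fix v assume "v \<noteq> r"
  show "weighted_Df E r k (delta w) v \<le> Max (wt k ` {..Suc (d w)})"
  proof (cases "Suc (d w) < d v")
    case True
    have "0 \<le> Max (wt k ` {..Suc (d w)})"
      using wt_nonneg[of k 0] by (intro Max_ge_iff[THEN iffD2]) auto
    then show ?thesis
      using Df_delta_eq_0[OF \<open>v \<noteq> r\<close> True] by simp
  next
    case False
    then have "wt k (d v) \<le> Max (wt k ` {..Suc (d w)})"
      by (intro Max_ge) auto
    then have "wt k (d v) * Df E r (delta w) v \<le> Max (wt k ` {..Suc (d w)}) * 1"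
      using Df_delta_le_1[of w v] wt_nonneg[of k "d v"] by (intro mult_mono) (auto simp: Df_def)
    then show ?thesis
      by simp
  qed
qed

lemma delta_Lk0: "delta w \<in> Lk0 E r k"
proof -
  have "eventually (\<lambda>v. weighted_Df E r k (delta w) v = 0) (filtercomap d at_top)"
    unfolding eventually_filtercomap_at_top_linorder
  proof (intro exI allI impI)
    fix v assume "Suc (Suc (d w)) \<le> d v"
    then show "weighted_Df E r k (delta w) v = 0"
      using Df_delta_eq_0[of v w] tdist_eq_0_iff[of v] by simp
  qed
  then have "((\<lambda>v. weighted_Df E r k (delta w) v) \<longlongrightarrow> 0) (filtercomap d at_top)"
    by (rule tendsto_eventually)
  then show ?thesis
    unfolding Lk0_iff_tendsto using delta_Lk by simp
qed

lemma delta_mem: "X = Lk E r k \<or> X = Lk0 E r k \<Longrightarrow> delta w \<in> X"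
  using delta_Lk delta_Lk0 by blast

lemma normk_delta_pos: "0 < normk E r k (delta w)"
proof (cases "w = r")
  case True
  then show ?thesis
    using norm_root_le_normk[OF delta_Lk[of w k]] by (simp add: delta_def)
next
  case False
  have "0 < wt k (d w)"
    using False tdist_eq_0_iff[of w] by (intro wt_pos) simp
  moreover have "Df E r (delta w) w = 1"
    using parent_edge_tdist(2)[OF False] unfolding Df_def delta_def by auto
  ultimately show ?thesis
    using weighted_Df_le_normk[OF delta_Lk[of w k] False] False by (simp add: delta_def)
qed

end

lemma norm_divide_diff_le:
  fixes a b p q c :: complex
  assumes "0 < \<delta>" "\<delta> \<le> cmod (p - c)" "\<delta> \<le> cmod (q - c)" "cmod p \<le> C"
  shows "cmod (a / (p - c) - b / (q - c))
    \<le> (1 / \<delta> + C / \<delta>\<^sup>2) * cmod (a - b) + cmod (p * a - q * b) / \<delta>\<^sup>2"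
proof -
  have "p - c \<noteq> 0" "q - c \<noteq> 0"
    using assms by auto
  have "(a - b) / (p - c) + (p * (a - b) - (p * a - q * b)) / ((p - c) * (q - c)) =
        ((a - b) * (q - c) + (p * (a - b) - (p * a - q * b))) / ((p - c) * (q - c))"
    using \<open>p - c \<noteq> 0\<close> \<open>q - c \<noteq> 0\<close> by (simp add: add_divide_distrib)
  also have "(a - b) * (q - c) + (p * (a - b) - (p * a - q * b)) = a * (q - c) - b * (p - c)"
    by (simp add: algebra_simps)
  also have "(a * (q - c) - b * (p - c)) / ((p - c) * (q - c)) = a / (p - c) - b / (q - c)"
    using \<open>p - c \<noteq> 0\<close> \<open>q - c \<noteq> 0\<close> by (simp add: diff_divide_distrib)
  finally have "a / (p - c) - b / (q - c) =
      (a - b) / (p - c) + (p * (a - b) - (p * a - q * b)) / ((p - c) * (q - c))"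
    by simp
  also have "cmod \<dots> \<le> cmod (a - b) / \<delta> + (C * cmod (a - b) + cmod (p * a - q * b)) / \<delta>\<^sup>2"
  proof (rule norm_triangle_le[OF add_mono])
    show "cmod ((a - b) / (p - c)) \<le> cmod (a - b) / \<delta>"
      unfolding norm_divide using assms(1,2) by (intro divide_left_mono) (auto intro!: mult_pos_pos)
    have "cmod (p * (a - b) - (p * a - q * b)) \<le> C * cmod (a - b) + cmod (p * a - q * b)"
      using norm_triangle_ineq4[of "p * (a - b)" "p * a - q * b"] mult_right_mono[OF assms(4) norm_ge_zero[of "a - b"]]
      by (simp add: norm_mult)
    moreover have "\<delta>\<^sup>2 \<le> cmod ((p - c) * (q - c))"
      unfolding norm_mult power2_eq_square using assms(1-3) by (intro mult_mono) auto
    ultimately show "cmod ((p * (a - b) - (p * a - q * b)) / ((p - c) * (q - c)))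
        \<le> (C * cmod (a - b) + cmod (p * a - q * b)) / \<delta>\<^sup>2"
      unfolding norm_divide using assms(1) order_trans[OF norm_ge_zero assms(4)] by (intro frac_le) auto
  qed
  also have "\<dots> = (1 / \<delta> + C / \<delta>\<^sup>2) * cmod (a - b) + cmod (p * a - q * b) / \<delta>\<^sup>2"
    by (simp add: field_simps add_divide_distrib)
  finally show ?thesis .
qed

lemma weighted_Df_resolvent_le:
  assumes "0 < \<delta>" "\<And>v. \<delta> \<le> cmod (\<psi> v - c)" "\<And>v. cmod (\<psi> v) \<le> C"
  shows "weighted_Df E r k (mult_op (\<lambda>v. 1 / (\<psi> v - c)) f) v
    \<le> (1 / \<delta> + C / \<delta>\<^sup>2) * weighted_Df E r k f v + 1 / \<delta>\<^sup>2 * weighted_Df E r k (mult_op \<psi> f) v"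
proof -
  have "Df E r (mult_op (\<lambda>v. 1 / (\<psi> v - c)) f) v
      \<le> (1 / \<delta> + C / \<delta>\<^sup>2) * Df E r f v + 1 / \<delta>\<^sup>2 * Df E r (mult_op \<psi> f) v"
    using norm_divide_diff_le[OF assms(1) assms(2)[of v] assms(2)[of "parent E r v"] assms(3)[of v],
        where a = "f v" and b = "f (parent E r v)"]
    unfolding Df_def mult_op_def by simp
  then have "weighted_Df E r k (mult_op (\<lambda>v. 1 / (\<psi> v - c)) f) v
      \<le> wt k (tdist E r v) * ((1 / \<delta> + C / \<delta>\<^sup>2) * Df E r f v + 1 / \<delta>\<^sup>2 * Df E r (mult_op \<psi> f) v)"
    by (rule mult_left_mono[OF _ wt_nonneg])
  then show ?thesis
    by (simp add: algebra_simps)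
qed

lemma approx_point_spectrum_subset_op_spectrum:
  assumes "\<And>c f. f \<in> X \<Longrightarrow> shift_op A c f \<in> X"
  shows "approx_point_spectrum X N A \<subseteq> op_spectrum X N A"
proof
  fix c assume "c \<in> approx_point_spectrum X N A"
  then obtain fs where fs: "\<And>n. fs n \<in> X" "\<And>n. N (fs n) = 1"
    and lim: "(\<lambda>n. N (shift_op A c (fs n))) \<longlonglongrightarrow> 0"
    unfolding approx_point_spectrum_def by blast
  show "c \<in> op_spectrum X N A"
    unfolding op_spectrum_def
  proof (intro CollectI notI)
    assume "invertible_op X N (shift_op A c)"
    then obtain S B where S: "\<And>f. f \<in> X \<Longrightarrow> S (shift_op A c f) = f"
      and B: "\<And>g. g \<in> X \<Longrightarrow> N (S g) \<le> B * N g"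
      unfolding invertible_op_def bounded_op_def by blast
    have "1 \<le> B * N (shift_op A c (fs n))" for n
      using B[OF assms[of "fs n" c, OF fs(1)]] S[OF fs(1)[of n]] fs(2)[of n] by simp
    moreover have "(\<lambda>n. B * N (shift_op A c (fs n))) \<longlonglongrightarrow> 0"
      using lim by (rule tendsto_mult_right_zero)
    ultimately have "1 \<le> (0::real)"
      by (intro LIMSEQ_le_const) auto
    then show False
      by simp
  qed
qed

locale bounded_multiplier = rooted_tree E r for E :: "'v \<Rightarrow> 'v \<Rightarrow> bool" and r :: 'v +
  fixes k :: nat and X :: "('v \<Rightarrow> complex) set" and \<psi> :: "'v \<Rightarrow> complex"
  assumes space: "X = Lk E r k \<or> X = Lk0 E r k"
    and bounded: "bounded_op X (normk E r k) (mult_op \<psi>)"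
begin

lemma mem_Lk:
  assumes "f \<in> X"
  shows "f \<in> Lk E r k"
  using space Lk0_subset_Lk[of E r k] assms by blast

lemma mult_op_mem: "f \<in> X \<Longrightarrow> mult_op \<psi> f \<in> X"
  using bounded unfolding bounded_op_def by blast

lemma shift_op_mem: "f \<in> X \<Longrightarrow> shift_op (mult_op \<psi>) c f \<in> X"
  unfolding shift_op_def by (rule diff_scaled_mem[OF space mult_op_mem])

lemma multiplier_bound:
  obtains C where "0 \<le> C" "\<And>f. f \<in> X \<Longrightarrow> normk E r k (mult_op \<psi> f) \<le> C * normk E r k f"
    "\<And>w. cmod (\<psi> w) \<le> C"
proof -
  obtain C where C: "\<And>f. f \<in> X \<Longrightarrow> normk E r k (mult_op \<psi> f) \<le> C * normk E r k f"
    using bounded unfolding bounded_op_def by blast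
  have "cmod (\<psi> w) \<le> C" for w
  proof -
    have "mult_op \<psi> (delta w) = (\<lambda>v. \<psi> w * delta w v)"
      by (auto simp: mult_op_def delta_def)
    then have "cmod (\<psi> w) * normk E r k (delta w) \<le> C * normk E r k (delta w)"
      using C[OF delta_mem[OF space, of w]] normk_scale[OF delta_Lk[of w k], of "\<psi> w"] by simp
    then show ?thesis
      using normk_delta_pos by simp
  qed
  moreover have "0 \<le> C"
    using calculation[of r] norm_ge_zero[of "\<psi> r"] by linarith
  ultimately show thesis
    using C that by blast
qed

lemma point_spectrum_eq: "point_spectrum X (normk E r k) (mult_op \<psi>) = range \<psi>"
proof (intro set_eqI iffI)
  fix c assume "c \<in> point_spectrum X (normk E r k) (mult_op \<psi>)"
  then obtain f w where "mult_op \<psi> f = (\<lambda>v. c * f v)" "f w \<noteq> 0"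
    unfolding point_spectrum_def by fastforce
  then have "\<psi> w = c"
    unfolding mult_op_def by (metis mult_cancel_right)
  then show "c \<in> range \<psi>"
    by blast
next
  fix c assume "c \<in> range \<psi>"
  then obtain w where "c = \<psi> w"
    by blast
  then have "mult_op \<psi> (delta w) = (\<lambda>v. c * delta w v)" "delta w \<noteq> (\<lambda>_. 0)"
    by (auto simp: mult_op_def delta_def fun_eq_iff)
  then show "c \<in> point_spectrum X (normk E r k) (mult_op \<psi>)"
    unfolding point_spectrum_def using delta_mem[OF space, of w] by blast
qed

lemma resolvent_bounded:
  assumes "0 < \<delta>" "\<And>v. \<delta> \<le> cmod (\<psi> v - c)"
  shows "bounded_op X (normk E r k) (mult_op (\<lambda>v. 1 / (\<psi> v - c)))"
proof -
  let ?R = "mult_op (\<lambda>v. 1 / (\<psi> v - c))"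
  obtain C where C: "0 \<le> C" "\<And>f. f \<in> X \<Longrightarrow> normk E r k (mult_op \<psi> f) \<le> C * normk E r k f"
    "\<And>w. cmod (\<psi> w) \<le> C"
    using multiplier_bound by blast
  define \<alpha> where "\<alpha> = 1 / \<delta> + C / \<delta>\<^sup>2"
  define \<beta> where "\<beta> = 1 / \<delta>\<^sup>2"
  have "0 \<le> \<alpha>" "0 \<le> \<beta>"
    using assms(1) C(1) by (simp_all add: \<alpha>_def \<beta>_def)
  have dom: "weighted_Df E r k (?R f) v
      \<le> \<alpha> * weighted_Df E r k f v + \<beta> * weighted_Df E r k (mult_op \<psi> f) v" for f v
    unfolding \<alpha>_def \<beta>_def by (rule weighted_Df_resolvent_le[OF assms C(3)])
  have bound: "normk E r k (?R f) \<le> (1 / \<delta> + \<alpha> + \<beta> * C) * normk E r k f" if "f \<in> X" for f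
  proof -
    have "cmod (?R f r) \<le> normk E r k f / \<delta>"
    proof -
      have "cmod (?R f r) = cmod (f r) / cmod (\<psi> r - c)"
        by (simp add: mult_op_def norm_divide)
      also have "\<dots> \<le> cmod (f r) / \<delta>"
        using assms(1) assms(2)[of r] by (intro divide_left_mono) (auto intro!: mult_pos_pos)
      also have "\<dots> \<le> normk E r k f / \<delta>"
        using norm_root_le_normk[OF mem_Lk[OF that]] assms(1) by (simp add: divide_right_mono)
      finally show ?thesis .
    qed
    moreover have "\<beta> * normk E r k (mult_op \<psi> f) \<le> \<beta> * (C * normk E r k f)"
      using C(2)[OF that] \<open>0 \<le> \<beta>\<close> by (rule mult_left_mono)
    moreover have "normk E r k (?R f)
        \<le> cmod (?R f r) + (\<alpha> * normk E r k f + \<beta> * normk E r k (mult_op \<psi> f))"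
      using mem_Lk[OF that] mem_Lk[OF mult_op_mem[OF that]] \<open>0 \<le> \<alpha>\<close> \<open>0 \<le> \<beta>\<close> dom
      by (rule normk_dominated_le)
    ultimately show ?thesis
      by (simp add: algebra_simps add_divide_distrib)
  qed
  have "?R f \<in> X" if "f \<in> X" for f
    using space that mult_op_mem[OF that] \<open>0 \<le> \<alpha>\<close> \<open>0 \<le> \<beta>\<close> dom by (rule dominated_mem)
  moreover have "?R (\<lambda>v. a * f v + b * g v) = (\<lambda>v. a * ?R f v + b * ?R g v)" for a b f g
    by (simp add: mult_op_def algebra_simps)
  ultimately show ?thesis
    unfolding bounded_op_def using bound by blast
qed

lemma invertible_shift_op:
  assumes "0 < \<delta>" "\<And>v. \<delta> \<le> cmod (\<psi> v - c)"
  shows "invertible_op X (normk E r k) (shift_op (mult_op \<psi>) c)"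
  unfolding invertible_op_def
proof (intro exI conjI ballI)
  have "\<psi> v - c \<noteq> 0" for v
    using assms(1) assms(2)[of v] by auto
  then show "mult_op (\<lambda>v. 1 / (\<psi> v - c)) (shift_op (mult_op \<psi>) c f) = f"
    and "shift_op (mult_op \<psi>) c (mult_op (\<lambda>v. 1 / (\<psi> v - c)) f) = f" for f
    by (simp_all add: fun_eq_iff mult_op_def shift_op_def flip: left_diff_distrib diff_divide_distrib)
qed (rule resolvent_bounded[OF assms])

lemma op_spectrum_subset_closure: "op_spectrum X (normk E r k) (mult_op \<psi>) \<subseteq> closure (range \<psi>)"
proof
  fix c assume c: "c \<in> op_spectrum X (normk E r k) (mult_op \<psi>)"
  show "c \<in> closure (range \<psi>)"
  proof (rule ccontr)
    assume "c \<notin> closure (range \<psi>)"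
    then obtain \<delta> where "0 < \<delta>" "\<And>v. \<delta> \<le> cmod (\<psi> v - c)"
      unfolding closure_approachable dist_norm by (auto simp: not_less)
    then show False
      using c invertible_shift_op unfolding op_spectrum_def by blast
  qed
qed

lemma closure_subset_approx_point_spectrum:
  "closure (range \<psi>) \<subseteq> approx_point_spectrum X (normk E r k) (mult_op \<psi>)"
proof
  fix c assume "c \<in> closure (range \<psi>)"
  then obtain x where x: "\<And>n. x n \<in> range \<psi>" "x \<longlonglongrightarrow> c"
    unfolding closure_sequential by blast
  define w where "w n = inv \<psi> (x n)" for n
  have "\<psi> (w n) = x n" for n
    unfolding w_def using x(1) by (rule f_inv_into_f)
  define fs where "fs n = (\<lambda>v. (1 / of_real (normk E r k (delta (w n)))) * delta (w n) v)" for n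
  have fs_mem: "fs n \<in> X" for n
    unfolding fs_def using space delta_mem[OF space] by (rule scaled_mem)
  have fs_norm: "normk E r k (fs n) = 1" for n
    unfolding fs_def using normk_scale[OF delta_Lk[of "w n" k], of "1 / of_real (normk E r k (delta (w n)))"]
      normk_delta_pos[of k "w n"] by (simp add: norm_divide)
  have "shift_op (mult_op \<psi>) c (fs n) = (\<lambda>v. (x n - c) * fs n v)" for n
    using \<open>\<psi> (w n) = x n\<close>
    by (auto simp: fun_eq_iff shift_op_def mult_op_def fs_def delta_def algebra_simps
        simp flip: add_divide_distrib)
  then have "normk E r k (shift_op (mult_op \<psi>) c (fs n)) = cmod (x n - c)" for n
    using normk_scale[OF mem_Lk[OF fs_mem]] fs_norm by simp
  moreover have "(\<lambda>n. cmod (x n - c)) \<longlonglongrightarrow> 0"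
    using x(2) by (intro tendsto_norm_zero LIM_zero)
  ultimately show "c \<in> approx_point_spectrum X (normk E r k) (mult_op \<psi>)"
    unfolding approx_point_spectrum_def using fs_mem fs_norm by (intro CollectI exI[of _ fs]) auto
qed

end

theorem theorem4p2:
  fixes E :: "'v \<Rightarrow> 'v \<Rightarrow> bool" and r :: 'v and k :: nat
    and \<psi> :: "'v \<Rightarrow> complex" and X :: "('v \<Rightarrow> complex) set"
  assumes "rooted_tree_no_terminal E r"
    and "X = Lk E r k \<or> X = Lk0 E r k"
    and "bounded_op X (normk E r k) (mult_op \<psi>)"
  shows "point_spectrum X (normk E r k) (mult_op \<psi>) = range \<psi> \<and>
         op_spectrum X (normk E r k) (mult_op \<psi>) = closure (range \<psi>) \<and>
         approx_point_spectrum X (normk E r k) (mult_op \<psi>) = closure (range \<psi>)"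
proof -
  interpret bounded_multiplier E r k X \<psi>
    using assms by unfold_locales
  have "approx_point_spectrum X (normk E r k) (mult_op \<psi>) \<subseteq> op_spectrum X (normk E r k) (mult_op \<psi>)"
    using shift_op_mem by (rule approx_point_spectrum_subset_op_spectrum)
  then show ?thesis
    using point_spectrum_eq op_spectrum_subset_closure closure_subset_approx_point_spectrum by blast
qed

end
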